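(* Let $A$ be the $C^*$-subalgebra of $l^\infty(\mathbb N)$ consisting of all bounded sequences $\{a_n\}_{n\in\mathbb N}$ such that $\lim_{n\to\infty}|a_{n+1}-a_n|=0$ (so $A=C(\nu\mathbb N)$, where $\nu\mathbb N$ is the Higson compactification of $\mathbb N$). Then $A$ is $C^*$-reflexive.
   Context: A $C^*$-algebra $A$ is called $C^*$-reflexive if the standard Hilbert $A$-module $H_A=l_2(A)$ (sequences $(a_i)$ in $A$ with $\sum_ia_i^*a_i$ norm convergent, inner product $\langle a,b\rangle=\sum_i a_i^*b_i$) satisfies $H_A''=H_A$, where for a Hilbert $A$-module $M$, $M'$ denotes the module of bounded $A$-module maps $M\to A$, $M''=(M')'$ (Paschke's conventions), and $M\subseteq M''$ via the canonical isometric inclusion. *)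

theory Defs
  imports Complex_Main
begin

text \<open>The C*-algebra A: bounded complex sequences with |a(n+1) - a(n)| -> 0,
  with pointwise operations, conjugation as involution, and sup norm.\<close>

definition inA :: "(nat \<Rightarrow> complex) \<Rightarrow> bool" where
  "inA a \<longleftrightarrow> (\<exists>B. \<forall>n. cmod (a n) \<le> B) \<and> (\<lambda>n. cmod (a (Suc n) - a n)) \<longlonglongrightarrow> 0"

text \<open>Sup norm (meaningful for bounded sequences).\<close>
definition supn :: "(nat \<Rightarrow> complex) \<Rightarrow> real" where
  "supn a = (SUP n. cmod (a n))"

text \<open>The standard Hilbert A-module H_A = l_2(A): sequences (x_i) in A such that
  sum_i x_i^* x_i converges in the norm of A.  x i is the i-th entry (an element of A).\<close>
definition HA :: "(nat \<Rightarrow> nat \<Rightarrow> complex) \<Rightarrow> bool" where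
  "HA x \<longleftrightarrow> (\<forall>i. inA (x i)) \<and>
     (\<exists>s. inA s \<and>
        (\<lambda>M. supn (\<lambda>n. (\<Sum>i<M. cnj (x i n) * x i n) - s n)) \<longlonglongrightarrow> 0)"

text \<open>A-valued inner product <x,y> = sum_i x_i^* y_i (computed pointwise; it agrees with
  the norm limit in A).\<close>
definition Hinner :: "(nat \<Rightarrow> nat \<Rightarrow> complex) \<Rightarrow> (nat \<Rightarrow> nat \<Rightarrow> complex) \<Rightarrow> nat \<Rightarrow> complex" where
  "Hinner x y = (\<lambda>n. \<Sum>i. cnj (x i n) * y i n)"

definition Hnorm :: "(nat \<Rightarrow> nat \<Rightarrow> complex) \<Rightarrow> real" where
  "Hnorm x = sqrt (supn (Hinner x x))"

text \<open>H_A': bounded A-module maps H_A -> A.  To identify maps agreeing on H_A,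
  we require them to vanish outside H_A (extensionality).
  Right module action on H_A: (x a)_i = x_i a.\<close>
definition Hdual :: "((nat \<Rightarrow> nat \<Rightarrow> complex) \<Rightarrow> nat \<Rightarrow> complex) \<Rightarrow> bool" where
  "Hdual f \<longleftrightarrow>
     (\<forall>x. HA x \<longrightarrow> inA (f x)) \<and>
     (\<forall>x. \<not> HA x \<longrightarrow> f x = (\<lambda>_. 0)) \<and>
     (\<forall>x y. HA x \<longrightarrow> HA y \<longrightarrow> f (\<lambda>i n. x i n + y i n) = (\<lambda>n. f x n + f y n)) \<and>
     (\<forall>x a. HA x \<longrightarrow> inA a \<longrightarrow> f (\<lambda>i n. x i n * a n) = (\<lambda>n. f x n * a n)) \<and>
     (\<exists>C. \<forall>x. HA x \<longrightarrow> supn (f x) \<le> C * Hnorm x)"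

definition dual_norm :: "((nat \<Rightarrow> nat \<Rightarrow> complex) \<Rightarrow> nat \<Rightarrow> complex) \<Rightarrow> real" where
  "dual_norm f = Sup {supn (f x) | x. HA x \<and> Hnorm x \<le> 1}"

text \<open>H_A'': bounded A-module maps H_A' -> A, where (Paschke) H_A' is a right A-module
  via (f a)(x) = a^* f(x), with pointwise addition.\<close>
definition Hbidual :: "(((nat \<Rightarrow> nat \<Rightarrow> complex) \<Rightarrow> nat \<Rightarrow> complex) \<Rightarrow> nat \<Rightarrow> complex) \<Rightarrow> bool" where
  "Hbidual F \<longleftrightarrow>
     (\<forall>f. Hdual f \<longrightarrow> inA (F f)) \<and>
     (\<forall>f g. Hdual f \<longrightarrow> Hdual g \<longrightarrow> F (\<lambda>x n. f x n + g x n) = (\<lambda>n. F f n + F g n)) \<and>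
     (\<forall>f a. Hdual f \<longrightarrow> inA a \<longrightarrow> F (\<lambda>x n. cnj (a n) * f x n) = (\<lambda>n. F f n * a n)) \<and>
     (\<exists>C. \<forall>f. Hdual f \<longrightarrow> supn (F f) \<le> C * dual_norm f)"

end

theory Submission
  imports Defs "HOL-Analysis.Analysis"
begin

text \<open>A bounded module map f : H_A \<rightarrow> A is given by coefficients, f y = \<Sum>i f(e_i) y_i
  pointwise, with \<Sum>i |f(e_i)(n)|^2 bounded in n.  For F in H_A'' put x_i = cnj (F d_i), where
  d_i is the i-th coordinate functional.  Multiplying a functional by the indicator of a point n
  (an element of A) and using the A-linearity of F shows F g (n) = \<Sum>i F(d_i)(n) cnj v_i
  whenever g y (n) = \<Sum>i v_i y_i(n); hence F is evaluation at x followed by conjugation, once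
  x is known to lie in H_A.  That requires the l^2-tails of the rows (F(d_i)(m))_i to tend to 0
  uniformly in m, and this is where the Higson condition enters: otherwise there are points
  m_j with large tails after K_j, separated so that no m_j + 1 is again one of them, and F
  maps the functional pairing with these tails at the points m_j to a sequence which is large
  at each m_j and vanishes at m_j + 1, so it is not in A.\<close>

section \<open>The algebra A\<close>

lemma inA_bounded: "inA a \<Longrightarrow> \<exists>B. \<forall>n. cmod (a n) \<le> B"
  by (auto simp: inA_def)

lemma inA_tendsto_0:
  assumes "a \<longlonglongrightarrow> 0" shows "inA a"
proof -
  have "bounded (range a)" using assms by (rule convergent_imp_bounded)
  then obtain B where "\<forall>n. cmod (a n) \<le> B" by (auto simp: bounded_iff)
  moreover have "(\<lambda>n. a (Suc n) - a n) \<longlonglongrightarrow> 0 - 0"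
    by (intro tendsto_diff LIMSEQ_Suc assms)
  hence "(\<lambda>n. cmod (a (Suc n) - a n)) \<longlonglongrightarrow> 0"
    using tendsto_norm_zero by fastforce
  ultimately show ?thesis unfolding inA_def by blast
qed

lemma inA_const: "inA (\<lambda>n. c)"
  by (auto simp: inA_def)

lemma inA_indicator_point: "inA (\<lambda>m. if m = n then c else 0)"
proof (rule inA_tendsto_0, rule LIMSEQ_I)
  fix r :: real assume "r > 0"
  thus "\<exists>no. \<forall>m\<ge>no. norm ((if m = n then c else 0) - 0) < r" by (intro exI[of _ "Suc n"]) auto
qed

lemma inA_if_const: "inA a \<Longrightarrow> inA (\<lambda>m. if P then a m else 0)"
  by (cases P) (simp_all add: inA_const)

lemma inA_add: "inA a \<Longrightarrow> inA b \<Longrightarrow> inA (\<lambda>n. a n + b n)"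
proof -
  assume "inA a" "inA b"
  then obtain A B where A: "\<forall>n. cmod (a n) \<le> A" and B: "\<forall>n. cmod (b n) \<le> B"
    and da: "(\<lambda>n. cmod (a (Suc n) - a n)) \<longlonglongrightarrow> 0" and db: "(\<lambda>n. cmod (b (Suc n) - b n)) \<longlonglongrightarrow> 0"
    by (auto simp: inA_def)
  have "\<forall>n. cmod (a n + b n) \<le> A + B" using A B by (meson add_mono norm_triangle_le)
  moreover have "(\<lambda>n. cmod (a (Suc n) + b (Suc n) - (a n + b n))) \<longlonglongrightarrow> 0"
  proof (rule Lim_null_comparison)
    show "\<forall>\<^sub>F n in sequentially. norm (cmod (a (Suc n) + b (Suc n) - (a n + b n)))
        \<le> cmod (a (Suc n) - a n) + cmod (b (Suc n) - b n)"
      by (intro always_eventually allI) (simp add: add_diff_add norm_triangle_ineq)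
    show "(\<lambda>n. cmod (a (Suc n) - a n) + cmod (b (Suc n) - b n)) \<longlonglongrightarrow> 0"
      using tendsto_add[OF da db] by simp
  qed
  ultimately show ?thesis unfolding inA_def by blast
qed

lemma inA_mult: "inA a \<Longrightarrow> inA b \<Longrightarrow> inA (\<lambda>n. a n * b n)"
proof -
  assume "inA a" "inA b"
  then obtain A B where A: "\<forall>n. cmod (a n) \<le> A" and B: "\<forall>n. cmod (b n) \<le> B"
    and da: "(\<lambda>n. cmod (a (Suc n) - a n)) \<longlonglongrightarrow> 0" and db: "(\<lambda>n. cmod (b (Suc n) - b n)) \<longlonglongrightarrow> 0"
    by (auto simp: inA_def)
  have "0 \<le> A" using A norm_ge_zero order_trans by blast
  hence "\<forall>n. cmod (a n * b n) \<le> A * B" unfolding norm_mult using A B by (intro allI mult_mono) auto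
  moreover have "(\<lambda>n. cmod (a (Suc n) * b (Suc n) - a n * b n)) \<longlonglongrightarrow> 0"
  proof (rule Lim_null_comparison)
    show "\<forall>\<^sub>F n in sequentially. norm (cmod (a (Suc n) * b (Suc n) - a n * b n))
        \<le> A * cmod (b (Suc n) - b n) + B * cmod (a (Suc n) - a n)"
    proof (intro always_eventually allI)
      fix n
      have e: "a (Suc n) * b (Suc n) - a n * b n = a (Suc n) * (b (Suc n) - b n) + b n * (a (Suc n) - a n)"
        by (simp add: algebra_simps)
      have "cmod (a (Suc n) * (b (Suc n) - b n)) \<le> A * cmod (b (Suc n) - b n)"
        unfolding norm_mult using A by (intro mult_right_mono) auto
      moreover have "cmod (b n * (a (Suc n) - a n)) \<le> B * cmod (a (Suc n) - a n)"
        unfolding norm_mult using B by (intro mult_right_mono) auto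
      ultimately show "norm (cmod (a (Suc n) * b (Suc n) - a n * b n))
          \<le> A * cmod (b (Suc n) - b n) + B * cmod (a (Suc n) - a n)"
        unfolding e real_norm_def abs_of_nonneg[OF norm_ge_zero]
        by (rule order_trans[OF norm_triangle_ineq add_mono])
    qed
    show "(\<lambda>n. A * cmod (b (Suc n) - b n) + B * cmod (a (Suc n) - a n)) \<longlonglongrightarrow> 0"
      using tendsto_add[OF tendsto_mult_right_zero[OF db, of A] tendsto_mult_right_zero[OF da, of B]]
      by simp
  qed
  ultimately show ?thesis unfolding inA_def by blast
qed

lemma inA_cnj: "inA a \<Longrightarrow> inA (\<lambda>n. cnj (a n))"
  unfolding inA_def by (simp flip: complex_cnj_diff)

lemma inA_diff: "inA a \<Longrightarrow> inA b \<Longrightarrow> inA (\<lambda>n. a n - b n)"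
  using inA_add[OF _ inA_mult[OF inA_const[of "-1"]], of a b] by simp

lemma inA_sum: "finite S \<Longrightarrow> (\<And>i. i \<in> S \<Longrightarrow> inA (a i)) \<Longrightarrow> inA (\<lambda>n. \<Sum>i\<in>S. a i n)"
  by (induction S rule: finite_induct) (auto intro: inA_add simp: inA_const)

lemma inA_uniform_limit:
  assumes "\<And>e. e > 0 \<Longrightarrow> \<exists>a. inA a \<and> (\<forall>n. cmod (s n - a n) \<le> e)"
  shows "inA s"
proof -
  obtain a B where "\<forall>n. cmod (s n - a n) \<le> 1" and "\<forall>n. cmod (a n) \<le> B"
    using assms[of 1] by (auto simp: inA_def)
  hence bounded: "\<forall>n. cmod (s n) \<le> B + 1"
    by (smt (verit) norm_triangle_ineq2)
  have "(\<lambda>n. cmod (s (Suc n) - s n)) \<longlonglongrightarrow> 0"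
  proof (rule LIMSEQ_I)
    fix r :: real assume r: "r > 0"
    obtain b where b: "inA b" and sb: "\<forall>n. cmod (s n - b n) \<le> r/4"
      using assms[of "r/4"] r by auto
    hence "(\<lambda>n. cmod (b (Suc n) - b n)) \<longlonglongrightarrow> 0" by (auto simp: inA_def)
    from LIMSEQ_D[OF this, of "r/4"] r
    obtain N where N: "\<forall>n\<ge>N. cmod (b (Suc n) - b n) < r/4" by auto
    have "norm (cmod (s (Suc n) - s n) - 0) < r" if "n \<ge> N" for n
    proof -
      have "cmod (s (Suc n) - s n)
          = cmod ((s (Suc n) - b (Suc n)) + (b (Suc n) - b n) - (s n - b n))" by simp
      also have "\<dots> \<le> cmod (s (Suc n) - b (Suc n)) + cmod (b (Suc n) - b n) + cmod (s n - b n)"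
        by (intro order_trans[OF norm_triangle_ineq4] add_right_mono norm_triangle_ineq)
      finally show ?thesis using N[rule_format, OF that] sb[rule_format, of n] sb[rule_format, of "Suc n"]
        using r by simp
    qed
    thus "\<exists>N. \<forall>n\<ge>N. norm (cmod (s (Suc n) - s n) - 0) < r" by blast
  qed
  with bounded show ?thesis unfolding inA_def by blast
qed

lemma norm_le_supn: "(\<And>n. cmod (a n) \<le> B) \<Longrightarrow> cmod (a n) \<le> supn a"
  unfolding supn_def by (rule cSUP_upper) (auto intro!: bdd_aboveI2[where M=B])

lemma inA_norm_le_supn: "inA a \<Longrightarrow> cmod (a n) \<le> supn a"
  using norm_le_supn inA_bounded by metis

lemma supn_le: "(\<And>n. cmod (a n) \<le> B) \<Longrightarrow> supn a \<le> B"
  unfolding supn_def by (rule cSUP_least) auto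

definition tail_sum :: "(nat \<Rightarrow> real) \<Rightarrow> nat \<Rightarrow> real" where
  "tail_sum g N = (\<Sum>i. if N \<le> i then g i else 0)"

lemma sum_atLeastLessThan_eq_diff:
  fixes g :: "nat \<Rightarrow> 'a::ab_group_add"
  assumes "N \<le> M" shows "(\<Sum>i\<in>{N..<M}. g i) = (\<Sum>i<M. g i) - (\<Sum>i<N. g i)"
proof -
  have "(\<Sum>i<M. g i) = (\<Sum>i<N. g i) + (\<Sum>i\<in>{N..<M}. g i)"
    using assms by (metis atLeast0LessThan sum.atLeastLessThan_concat zero_le)
  thus ?thesis by simp
qed

lemma sums_if_lessThan:
  fixes g :: "nat \<Rightarrow> 'a::{t2_space,topological_comm_monoid_add}"
  shows "(\<lambda>i. if i < N then g i else 0) sums (\<Sum>i<N. g i)"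
  using sums_If_finite_set[of "{..<N}" g] by simp

lemma
  assumes "summable g"
  shows summable_tail: "summable (\<lambda>i. if N \<le> i then g i else 0)"
    and tail_sum_eq: "tail_sum g N = suminf g - (\<Sum>i<N. g i)"
proof -
  have "(\<lambda>i. if N \<le> i then g i else 0) = (\<lambda>i. g i - (if i < N then g i else 0))"
    by auto
  hence "(\<lambda>i. if N \<le> i then g i else 0) sums (suminf g - (\<Sum>i<N. g i))"
    by (simp only:) (intro sums_diff summable_sums assms sums_if_lessThan)
  thus "summable (\<lambda>i. if N \<le> i then g i else 0)" "tail_sum g N = suminf g - (\<Sum>i<N. g i)"
    unfolding tail_sum_def by (auto simp: sums_iff)
qed

lemma tail_sum_tendsto_0: "summable g \<Longrightarrow> tail_sum g \<longlonglongrightarrow> 0"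
proof -
  assume g: "summable g"
  hence "(\<lambda>N. suminf g - (\<Sum>i<N. g i)) \<longlonglongrightarrow> suminf g - suminf g"
    by (intro tendsto_diff tendsto_const summable_LIMSEQ)
  moreover have "tail_sum g = (\<lambda>N. suminf g - (\<Sum>i<N. g i))"
    using tail_sum_eq[OF g] by auto
  ultimately show ?thesis by simp
qed

lemma tail_sum_nonneg: "summable g \<Longrightarrow> (\<And>i. g i \<ge> 0) \<Longrightarrow> tail_sum g N \<ge> 0"
  unfolding tail_sum_def using summable_tail by (intro suminf_nonneg) auto

lemma sum_segment_le_tail_sum:
  assumes g: "summable g" and "\<And>i. (0::real) \<le> g i" and "N \<le> M"
  shows "(\<Sum>i\<in>{N..<M}. g i) \<le> tail_sum g N"
proof -
  have "(\<Sum>i<M. g i) \<le> suminf g" using sum_le_suminf[OF g, of "{..<M}"] assms(2) by auto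
  thus ?thesis unfolding sum_atLeastLessThan_eq_diff[OF \<open>N \<le> M\<close>] tail_sum_eq[OF g] by simp
qed

lemma nonneg_series_bounded:
  fixes g :: "nat \<Rightarrow> real"
  assumes "\<And>i. 0 \<le> g i" and bound: "\<And>N. (\<Sum>i<N. g i) \<le> B"
  shows "summable g" and "suminf g \<le> B"
proof -
  show g: "summable g"
    using bound[of "Suc _"] by (intro bounded_imp_summable[where B=B] assms) (simp add: lessThan_Suc_atMost)
  show "suminf g \<le> B" by (rule suminf_le_const[OF g bound])
qed

lemma l2_cauchy_schwarz:
  fixes a b :: "nat \<Rightarrow> complex"
  assumes a: "summable (\<lambda>i. (cmod (a i))\<^sup>2)" and b: "summable (\<lambda>i. (cmod (b i))\<^sup>2)"
  shows "summable (\<lambda>i. a i * b i)"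
    and "cmod (\<Sum>i. a i * b i) \<le> sqrt (\<Sum>i. (cmod (a i))\<^sup>2) * sqrt (\<Sum>i. (cmod (b i))\<^sup>2)"
proof -
  have "norm (cmod (a i * b i)) \<le> ((cmod (a i))\<^sup>2 + (cmod (b i))\<^sup>2) / 2" for i
    using zero_le_power2[of "cmod (a i) - cmod (b i)"]
    by (simp add: norm_mult power2_eq_square algebra_simps)
  hence sn: "summable (\<lambda>i. cmod (a i * b i))"
    by (intro summable_comparison_test[OF _ summable_divide[OF summable_add[OF a b]]]) blast
  thus "summable (\<lambda>i. a i * b i)" by (rule summable_norm_cancel)
  have "cmod (\<Sum>i. a i * b i) \<le> (\<Sum>i. cmod (a i * b i))" by (rule summable_norm[OF sn])
  also have "\<dots> \<le> sqrt (\<Sum>i. (cmod (a i))\<^sup>2) * sqrt (\<Sum>i. (cmod (b i))\<^sup>2)"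
  proof (rule suminf_le_const[OF sn])
    fix K
    have "(\<Sum>i<K. cmod (a i * b i)) = (\<Sum>i<K. \<bar>cmod (a i)\<bar> * \<bar>cmod (b i)\<bar>)"
      by (simp add: norm_mult)
    also have "\<dots> \<le> L2_set (\<lambda>i. cmod (a i)) {..<K} * L2_set (\<lambda>i. cmod (b i)) {..<K}"
      by (rule L2_set_mult_ineq)
    also have "\<dots> \<le> sqrt (\<Sum>i. (cmod (a i))\<^sup>2) * sqrt (\<Sum>i. (cmod (b i))\<^sup>2)"
      unfolding L2_set_def
      by (intro mult_mono real_sqrt_le_mono sum_le_suminf a b) (auto intro: sum_nonneg suminf_nonneg a)
    finally show "(\<Sum>i<K. cmod (a i * b i)) \<le> sqrt (\<Sum>i. (cmod (a i))\<^sup>2) * sqrt (\<Sum>i. (cmod (b i))\<^sup>2)" .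
  qed
  finally show "cmod (\<Sum>i. a i * b i) \<le> sqrt (\<Sum>i. (cmod (a i))\<^sup>2) * sqrt (\<Sum>i. (cmod (b i))\<^sup>2)" .
qed

lemma le_square_of_le_mult_sqrt:
  fixes S C :: real
  assumes "0 \<le> S" and "S \<le> C * sqrt S"
  shows "S \<le> C\<^sup>2"
proof (cases "S = 0")
  case False
  hence pos: "sqrt S > 0" using assms(1) by simp
  have "sqrt S * sqrt S \<le> C * sqrt S" using assms by simp
  hence "sqrt S \<le> C" using pos by (rule mult_right_le_imp_le)
  hence "(sqrt S)\<^sup>2 \<le> C\<^sup>2" using pos by (intro power_mono) auto
  thus ?thesis using assms(1) by simp
qed simp

section \<open>The Hilbert module H_A\<close>

definition uniform_l2_cauchy :: "(nat \<Rightarrow> nat \<Rightarrow> complex) \<Rightarrow> bool" where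
  "uniform_l2_cauchy x \<longleftrightarrow>
     (\<forall>e>0. \<exists>N. \<forall>n M. N \<le> M \<longrightarrow> (\<Sum>i\<in>{N..<M}. (cmod (x i n))\<^sup>2) \<le> e)"

lemma uniform_l2_cauchyD:
  assumes "uniform_l2_cauchy x" "e > 0"
  shows "\<exists>N0. \<forall>N\<ge>N0. \<forall>n M. (\<Sum>i\<in>{N..<M}. (cmod (x i n))\<^sup>2) \<le> e"
proof -
  obtain N0 where N0: "\<forall>n M. N0 \<le> M \<longrightarrow> (\<Sum>i\<in>{N0..<M}. (cmod (x i n))\<^sup>2) \<le> e"
    using assms unfolding uniform_l2_cauchy_def by blast
  have "(\<Sum>i\<in>{N..<M}. (cmod (x i n))\<^sup>2) \<le> e" if "N \<ge> N0" for N n M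
  proof (cases "N \<le> M")
    case True
    have "(\<Sum>i\<in>{N..<M}. (cmod (x i n))\<^sup>2) \<le> (\<Sum>i\<in>{N0..<M}. (cmod (x i n))\<^sup>2)"
      using that by (intro sum_mono2) auto
    also have "\<dots> \<le> e" using N0 True that by simp
    finally show ?thesis .
  qed (use assms in simp)
  thus ?thesis by blast
qed

lemma uniform_l2_cauchy_summable:
  assumes "uniform_l2_cauchy x" shows "summable (\<lambda>i. (cmod (x i n))\<^sup>2)"
  unfolding summable_Cauchy
proof (intro allI impI)
  fix e :: real assume "e > 0"
  then obtain N0 where N0: "\<forall>N\<ge>N0. \<forall>n M. (\<Sum>i\<in>{N..<M}. (cmod (x i n))\<^sup>2) \<le> e/2"
    using uniform_l2_cauchyD[OF assms, of "e/2"] by auto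
  have "norm (\<Sum>i\<in>{m..<k}. (cmod (x i n))\<^sup>2) < e" if "m \<ge> N0" for m k
  proof -
    have "norm (\<Sum>i\<in>{m..<k}. (cmod (x i n))\<^sup>2) = (\<Sum>i\<in>{m..<k}. (cmod (x i n))\<^sup>2)"
      by (simp add: sum_nonneg)
    also have "\<dots> \<le> e/2" using N0 that by blast
    finally show ?thesis using \<open>e > 0\<close> by simp
  qed
  thus "\<exists>N. \<forall>m\<ge>N. \<forall>k. norm (\<Sum>i = m..<k. (cmod (x i n))\<^sup>2) < e" by blast
qed

lemma uniform_l2_cauchy_tail:
  assumes "uniform_l2_cauchy x" "e > 0"
  shows "\<exists>N0. \<forall>N\<ge>N0. \<forall>n. tail_sum (\<lambda>i. (cmod (x i n))\<^sup>2) N \<le> e"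
proof -
  obtain N0 where N0: "\<forall>N\<ge>N0. \<forall>n M. (\<Sum>i\<in>{N..<M}. (cmod (x i n))\<^sup>2) \<le> e"
    using uniform_l2_cauchyD[OF assms] by auto
  have "tail_sum (\<lambda>i. (cmod (x i n))\<^sup>2) N \<le> e" if "N \<ge> N0" for N n
  proof -
    have s: "summable (\<lambda>i. (cmod (x i n))\<^sup>2)" using uniform_l2_cauchy_summable[OF assms(1)] .
    have "(\<lambda>M. (\<Sum>i<M. (cmod (x i n))\<^sup>2) - (\<Sum>i<N. (cmod (x i n))\<^sup>2))
        \<longlonglongrightarrow> (\<Sum>i. (cmod (x i n))\<^sup>2) - (\<Sum>i<N. (cmod (x i n))\<^sup>2)"
      by (intro tendsto_diff tendsto_const summable_LIMSEQ s)
    moreover have "\<forall>M\<ge>N. (\<Sum>i<M. (cmod (x i n))\<^sup>2) - (\<Sum>i<N. (cmod (x i n))\<^sup>2) \<le> e"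
      using N0 that by (simp add: sum_atLeastLessThan_eq_diff[symmetric])
    ultimately have "(\<Sum>i. (cmod (x i n))\<^sup>2) - (\<Sum>i<N. (cmod (x i n))\<^sup>2) \<le> e"
      by (intro LIMSEQ_le_const2) auto
    thus ?thesis using tail_sum_eq[OF s] by simp
  qed
  thus ?thesis by blast
qed

lemma power2_norm_if_zero: "(cmod (if P then a else 0))\<^sup>2 = (if P then (cmod a)\<^sup>2 else 0)"
  by simp

lemma cnj_mult_self: "cnj z * z = of_real ((cmod z)\<^sup>2)"
  by (metis complex_norm_square mult.commute)

lemma partial_inner_self:
  "(\<Sum>i<M. cnj (x i n) * x i n) = of_real (\<Sum>i<M. (cmod (x i n))\<^sup>2)"
  by (simp add: cnj_mult_self)

lemma HA_imp_uniform_l2_cauchy: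
  assumes "HA x" shows "uniform_l2_cauchy x"
  unfolding uniform_l2_cauchy_def
proof (intro allI impI)
  fix e :: real assume e: "e > 0"
  from assms obtain s where xi: "\<forall>i. inA (x i)" and s: "inA s"
    and L: "(\<lambda>M. supn (\<lambda>n. (\<Sum>i<M. cnj (x i n) * x i n) - s n)) \<longlonglongrightarrow> 0"
    unfolding HA_def by blast
  define r where "r M n = (\<Sum>i<M. cnj (x i n) * x i n) - s n" for M n
  have "inA (r M)" for M
    unfolding r_def using xi s by (intro inA_diff inA_sum inA_mult inA_cnj) auto
  hence close: "cmod (r M n) \<le> supn (r M)" for M n by (rule inA_norm_le_supn)
  from LIMSEQ_D[OF L, of "e/2"] e obtain M0 where "\<forall>M\<ge>M0. \<bar>supn (r M)\<bar> < e/2"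
    unfolding r_def by auto
  hence small: "cmod (r M n) < e/2" if "M \<ge> M0" for M n
    using close[of M n] that by fastforce
  have "(\<Sum>i\<in>{M0..<M}. (cmod (x i n))\<^sup>2) \<le> e" if "M0 \<le> M" for n M
  proof -
    have "(\<Sum>i\<in>{M0..<M}. (cmod (x i n))\<^sup>2) = cmod (of_real (\<Sum>i\<in>{M0..<M}. (cmod (x i n))\<^sup>2))"
      unfolding norm_of_real by (rule abs_of_nonneg[symmetric]) (simp add: sum_nonneg)
    also have "of_real (\<Sum>i\<in>{M0..<M}. (cmod (x i n))\<^sup>2) = r M n - r M0 n"
      unfolding r_def of_real_diff sum_atLeastLessThan_eq_diff[OF that] partial_inner_self by simp
    also have "cmod \<dots> \<le> cmod (r M n) + cmod (r M0 n)"
      by (rule norm_triangle_ineq4)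
    also have "\<dots> < e/2 + e/2"
      using small that by (intro add_strict_mono) auto
    finally show ?thesis by simp
  qed
  thus "\<exists>N. \<forall>n M. N \<le> M \<longrightarrow> (\<Sum>i = N..<M. (cmod (x i n))\<^sup>2) \<le> e" by blast
qed

lemma uniform_l2_cauchy_imp_HA:
  assumes xi: "\<forall>i. inA (x i)" and ucx: "uniform_l2_cauchy x" shows "HA x"
proof -
  define s where "s n = complex_of_real (\<Sum>i. (cmod (x i n))\<^sup>2)" for n
  have dist: "cmod ((\<Sum>i<M. cnj (x i n) * x i n) - s n) = tail_sum (\<lambda>i. (cmod (x i n))\<^sup>2) M" for M n
  proof -
    have sm: "summable (\<lambda>i. (cmod (x i n))\<^sup>2)" using uniform_l2_cauchy_summable[OF ucx] .
    hence "(\<Sum>i<M. cnj (x i n) * x i n) - s n = - of_real (tail_sum (\<lambda>i. (cmod (x i n))\<^sup>2) M)"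
      unfolding partial_inner_self s_def tail_sum_eq[OF sm] by simp
    thus ?thesis using tail_sum_nonneg[OF sm] by simp
  qed
  have close: "\<exists>M0. \<forall>M\<ge>M0. \<forall>n. cmod ((\<Sum>i<M. cnj (x i n) * x i n) - s n) \<le> e" if "e > 0" for e
    using uniform_l2_cauchy_tail[OF ucx that] unfolding dist by blast
  have "inA s"
  proof (rule inA_uniform_limit)
    fix e :: real assume "e > 0"
    then obtain M0 where "\<forall>n. cmod ((\<Sum>i<M0. cnj (x i n) * x i n) - s n) \<le> e"
      using close by blast
    hence "\<forall>n. cmod (s n - (\<Sum>i<M0. cnj (x i n) * x i n)) \<le> e"
      by (simp add: norm_minus_commute)
    moreover have "inA (\<lambda>n. \<Sum>i<M0. cnj (x i n) * x i n)"
      using xi by (intro inA_sum inA_mult inA_cnj) auto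
    ultimately show "\<exists>a. inA a \<and> (\<forall>n. cmod (s n - a n) \<le> e)" by blast
  qed
  moreover have "(\<lambda>M. supn (\<lambda>n. (\<Sum>i<M. cnj (x i n) * x i n) - s n)) \<longlonglongrightarrow> 0"
  proof (rule LIMSEQ_I)
    fix r :: real assume r: "r > 0"
    then obtain M0 where M0: "\<forall>M\<ge>M0. \<forall>n. cmod ((\<Sum>i<M. cnj (x i n) * x i n) - s n) \<le> r/2"
      using close[of "r/2"] by auto
    have "norm (supn (\<lambda>n. (\<Sum>i<M. cnj (x i n) * x i n) - s n) - 0) < r" if "M \<ge> M0" for M
    proof -
      have "supn (\<lambda>n. (\<Sum>i<M. cnj (x i n) * x i n) - s n) \<le> r/2"
        using M0 that by (intro supn_le) blast
      moreover have "0 \<le> supn (\<lambda>n. (\<Sum>i<M. cnj (x i n) * x i n) - s n)"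
        using norm_le_supn[of "\<lambda>n. (\<Sum>i<M. cnj (x i n) * x i n) - s n" "r/2" 0] M0 that
        by (meson norm_ge_zero order_trans)
      ultimately show ?thesis using r by simp
    qed
    thus "\<exists>M0. \<forall>M\<ge>M0. norm (supn (\<lambda>n. (\<Sum>i<M. cnj (x i n) * x i n) - s n) - 0) < r" by blast
  qed
  ultimately show ?thesis unfolding HA_def using xi by blast
qed

lemma HA_iff: "HA x \<longleftrightarrow> (\<forall>i. inA (x i)) \<and> uniform_l2_cauchy x"
proof -
  have "HA x \<Longrightarrow> \<forall>i. inA (x i)" unfolding HA_def by blast
  thus ?thesis using HA_imp_uniform_l2_cauchy uniform_l2_cauchy_imp_HA by blast
qed

lemma HA_summable: "HA x \<Longrightarrow> summable (\<lambda>i. (cmod (x i n))\<^sup>2)"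
  using HA_iff uniform_l2_cauchy_summable by blast

lemma HA_finite_support:
  assumes "\<forall>i. inA (y i)" "\<forall>i\<ge>N. \<forall>n. y i n = 0" shows "HA y"
proof -
  have "uniform_l2_cauchy y" unfolding uniform_l2_cauchy_def
  proof (intro allI impI)
    fix e :: real assume "e > 0"
    hence "\<forall>n M. N \<le> M \<longrightarrow> (\<Sum>i\<in>{N..<M}. (cmod (y i n))\<^sup>2) \<le> e"
      using assms(2) by simp
    thus "\<exists>N. \<forall>n M. N \<le> M \<longrightarrow> (\<Sum>i = N..<M. (cmod (y i n))\<^sup>2) \<le> e" by blast
  qed
  thus ?thesis using assms HA_iff by blast
qed

lemma HA_zero: "HA (\<lambda>i n. 0)"
  by (rule HA_finite_support[of _ 0]) (auto simp: inA_const)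

definition unit_vec :: "nat \<Rightarrow> nat \<Rightarrow> nat \<Rightarrow> complex" where
  "unit_vec i = (\<lambda>j m. if j = i then 1 else 0)"

lemma HA_unit_vec: "HA (unit_vec i)"
  by (rule HA_finite_support[of _ "Suc i"]) (auto simp: unit_vec_def inA_const)

lemma HA_dominated:
  assumes x: "HA x" and yi: "\<forall>i. inA (y i)"
    and d: "\<forall>i n. cmod (y i n) \<le> c * cmod (x i n)"
  shows "HA y"
proof -
  have "uniform_l2_cauchy y" unfolding uniform_l2_cauchy_def
  proof (intro allI impI)
    fix e :: real assume e: "e > 0"
    have c2: "c\<^sup>2 + 1 > 0" by (simp add: add_nonneg_pos)
    hence "e / (c\<^sup>2 + 1) > 0" using e by simp
    then obtain N where N: "\<forall>n M. N \<le> M \<longrightarrow> (\<Sum>i\<in>{N..<M}. (cmod (x i n))\<^sup>2) \<le> e / (c\<^sup>2 + 1)"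
      using x unfolding HA_iff uniform_l2_cauchy_def by blast
    have "(\<Sum>i\<in>{N..<M}. (cmod (y i n))\<^sup>2) \<le> e" if "N \<le> M" for n M
    proof -
      have "(\<Sum>i\<in>{N..<M}. (cmod (y i n))\<^sup>2) \<le> (\<Sum>i\<in>{N..<M}. c\<^sup>2 * (cmod (x i n))\<^sup>2)"
      proof (rule sum_mono)
        fix i
        have "(cmod (y i n))\<^sup>2 \<le> (c * cmod (x i n))\<^sup>2"
          using d by (intro power_mono) auto
        thus "(cmod (y i n))\<^sup>2 \<le> c\<^sup>2 * (cmod (x i n))\<^sup>2" by (simp add: power_mult_distrib)
      qed
      also have "\<dots> = c\<^sup>2 * (\<Sum>i\<in>{N..<M}. (cmod (x i n))\<^sup>2)" by (simp add: sum_distrib_left)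
      also have "\<dots> \<le> c\<^sup>2 * (e / (c\<^sup>2 + 1))"
        using N that by (intro mult_left_mono) auto
      also have "\<dots> = e * (c\<^sup>2 / (c\<^sup>2 + 1))" by simp
      also have "\<dots> \<le> e"
        using c2 e by (intro mult_left_le) (simp_all add: divide_le_eq_1)
      finally show ?thesis .
    qed
    thus "\<exists>N. \<forall>n M. N \<le> M \<longrightarrow> (\<Sum>i = N..<M. (cmod (y i n))\<^sup>2) \<le> e" by blast
  qed
  thus ?thesis using yi HA_iff by blast
qed

lemma HA_mult:
  assumes x: "HA x" and a: "inA a" shows "HA (\<lambda>i n. x i n * a n)"
proof -
  obtain B where B: "\<forall>n. cmod (a n) \<le> B" using inA_bounded[OF a] by blast
  show ?thesis
  proof (rule HA_dominated[OF x])
  show "\<forall>i n. cmod (x i n * a n) \<le> B * cmod (x i n)"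
  proof (intro allI)
    fix i n
    have "cmod (a n) * cmod (x i n) \<le> B * cmod (x i n)" using B by (intro mult_right_mono) auto
    thus "cmod (x i n * a n) \<le> B * cmod (x i n)" by (simp add: norm_mult mult.commute)
  qed
  show "\<forall>i. inA (\<lambda>n. x i n * a n)" using x a inA_mult HA_iff by blast
  qed
qed

lemma HA_restrict:
  assumes y: "HA y" shows "HA (\<lambda>i m. if P i then y i m else 0)"
proof (rule HA_dominated[OF y, of _ 1])
  show "\<forall>i. inA (\<lambda>m. if P i then y i m else 0)"
    using y by (auto simp: HA_iff intro: inA_if_const)
qed simp

lemma norm_add_squared_le: "(cmod (a + b))\<^sup>2 \<le> 2 * (cmod a)\<^sup>2 + 2 * (cmod b)\<^sup>2"
proof -
  have "(cmod (a + b))\<^sup>2 \<le> (cmod a + cmod b)\<^sup>2"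
    by (intro power_mono norm_triangle_ineq) simp
  also have "\<dots> \<le> 2 * (cmod a)\<^sup>2 + 2 * (cmod b)\<^sup>2"
    using zero_le_power2[of "cmod a - cmod b"] by (simp add: power2_eq_square algebra_simps)
  finally show ?thesis .
qed

lemma HA_add:
  assumes x: "HA x" and y: "HA y" shows "HA (\<lambda>i n. x i n + y i n)"
proof -
  have "uniform_l2_cauchy (\<lambda>i n. x i n + y i n)" unfolding uniform_l2_cauchy_def
  proof (intro allI impI)
    fix e :: real assume e: "e > 0"
    obtain N1 where N1: "\<forall>N\<ge>N1. \<forall>n M. (\<Sum>i\<in>{N..<M}. (cmod (x i n))\<^sup>2) \<le> e/4"
      using x e uniform_l2_cauchyD[of x "e/4"] by (auto simp: HA_iff)
    obtain N2 where N2: "\<forall>N\<ge>N2. \<forall>n M. (\<Sum>i\<in>{N..<M}. (cmod (y i n))\<^sup>2) \<le> e/4"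
      using y e uniform_l2_cauchyD[of y "e/4"] by (auto simp: HA_iff)
    have "(\<Sum>i\<in>{max N1 N2..<M}. (cmod (x i n + y i n))\<^sup>2) \<le> e" for n M
    proof -
      have "(\<Sum>i\<in>{max N1 N2..<M}. (cmod (x i n + y i n))\<^sup>2) \<le>
          (\<Sum>i\<in>{max N1 N2..<M}. 2 * (cmod (x i n))\<^sup>2 + 2 * (cmod (y i n))\<^sup>2)"
        by (intro sum_mono norm_add_squared_le)
      also have "\<dots> = 2 * (\<Sum>i\<in>{max N1 N2..<M}. (cmod (x i n))\<^sup>2)
          + 2 * (\<Sum>i\<in>{max N1 N2..<M}. (cmod (y i n))\<^sup>2)"
        by (simp add: sum.distrib sum_distrib_left)
      also have "\<dots> \<le> 2 * (e/4) + 2 * (e/4)"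
        using N1 N2 by (intro add_mono mult_left_mono) auto
      finally show ?thesis by simp
    qed
    thus "\<exists>N. \<forall>n M. N \<le> M \<longrightarrow> (\<Sum>i = N..<M. (cmod (x i n + y i n))\<^sup>2) \<le> e" by blast
  qed
  moreover have "\<forall>i. inA (\<lambda>n. x i n + y i n)" using x y inA_add by (auto simp: HA_iff)
  ultimately show ?thesis using HA_iff by blast
qed

lemma HA_sum_squares_bounded:
  assumes x: "HA x" shows "\<exists>B. \<forall>n. (\<Sum>i. (cmod (x i n))\<^sup>2) \<le> B"
proof -
  have "\<forall>i. \<exists>B. \<forall>n. cmod (x i n) \<le> B" using x inA_bounded by (auto simp: HA_iff)
  then obtain Bf where Bf: "\<forall>i n. cmod (x i n) \<le> Bf i" by metis
  obtain N where N: "\<forall>n. tail_sum (\<lambda>i. (cmod (x i n))\<^sup>2) N \<le> 1"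
    using x uniform_l2_cauchy_tail[of x 1] by (auto simp: HA_iff)
  have "(\<Sum>i. (cmod (x i n))\<^sup>2) \<le> (\<Sum>i<N. (Bf i)\<^sup>2) + 1" for n
  proof -
    have "(\<Sum>i. (cmod (x i n))\<^sup>2) = (\<Sum>i<N. (cmod (x i n))\<^sup>2) + tail_sum (\<lambda>i. (cmod (x i n))\<^sup>2) N"
      using tail_sum_eq[OF HA_summable[OF x]] by simp
    also have "\<dots> \<le> (\<Sum>i<N. (Bf i)\<^sup>2) + 1"
      using N Bf by (intro add_mono sum_mono power_mono) auto
    finally show ?thesis .
  qed
  thus ?thesis by blast
qed

lemma Hinner_self: "HA x \<Longrightarrow> Hinner x x n = of_real (\<Sum>i. (cmod (x i n))\<^sup>2)"
  unfolding Hinner_def cnj_mult_self by (simp add: suminf_of_real HA_summable)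

lemma sqrt_sum_squares_le_Hnorm:
  assumes x: "HA x" shows "sqrt (\<Sum>i. (cmod (x i n))\<^sup>2) \<le> Hnorm x"
proof -
  obtain B where B: "\<forall>n. (\<Sum>i. (cmod (x i n))\<^sup>2) \<le> B" using HA_sum_squares_bounded[OF x] by blast
  have "cmod (Hinner x x n) = (\<Sum>i. (cmod (x i n))\<^sup>2)" for n
    using HA_summable[OF x] by (simp add: Hinner_self[OF x] suminf_nonneg)
  moreover have "cmod (Hinner x x n) \<le> supn (Hinner x x)"
    by (rule norm_le_supn[where B=B]) (use B calculation in auto)
  ultimately show ?thesis unfolding Hnorm_def by simp
qed

lemma Hnorm_nonneg:
  assumes "HA x" shows "0 \<le> Hnorm x"
proof -
  have "0 \<le> sqrt (\<Sum>i. (cmod (x i 0))\<^sup>2)"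
    using suminf_nonneg[OF HA_summable[OF assms]] by simp
  thus ?thesis using sqrt_sum_squares_le_Hnorm[OF assms, of 0] by linarith
qed

lemma Hnorm_le_sqrt:
  assumes x: "HA x" and B: "\<forall>n. (\<Sum>i. (cmod (x i n))\<^sup>2) \<le> B"
  shows "Hnorm x \<le> sqrt B"
proof -
  have "supn (Hinner x x) \<le> B"
    using B HA_summable[OF x] by (intro supn_le) (simp add: Hinner_self[OF x] suminf_nonneg)
  thus ?thesis unfolding Hnorm_def by simp
qed

section \<open>The dual module H_A'\<close>

lemma Hdual_inA: "Hdual f \<Longrightarrow> HA x \<Longrightarrow> inA (f x)"
  unfolding Hdual_def by blast

lemma Hdual_outside: "Hdual f \<Longrightarrow> \<not> HA x \<Longrightarrow> f x = (\<lambda>_. 0)"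
  unfolding Hdual_def by blast

lemma Hdual_add: "Hdual f \<Longrightarrow> HA x \<Longrightarrow> HA y \<Longrightarrow> f (\<lambda>i n. x i n + y i n) = (\<lambda>n. f x n + f y n)"
  unfolding Hdual_def by blast

lemma Hdual_module: "Hdual f \<Longrightarrow> HA x \<Longrightarrow> inA a \<Longrightarrow> f (\<lambda>i n. x i n * a n) = (\<lambda>n. f x n * a n)"
  unfolding Hdual_def by blast

lemma Hdual_bounded:
  assumes "Hdual f" shows "\<exists>C\<ge>0. \<forall>x. HA x \<longrightarrow> supn (f x) \<le> C * Hnorm x"
proof -
  obtain C where C: "\<forall>x. HA x \<longrightarrow> supn (f x) \<le> C * Hnorm x"
    using assms unfolding Hdual_def by blast
  have "supn (f x) \<le> max C 0 * Hnorm x" if "HA x" for x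
  proof -
    have "C * Hnorm x \<le> max C 0 * Hnorm x" using Hnorm_nonneg[OF that] by (intro mult_right_mono) auto
    thus ?thesis using C that by auto
  qed
  thus ?thesis by (intro exI[of _ "max C 0"]) auto
qed

lemma Hdual_norm_le_supn: "Hdual f \<Longrightarrow> HA x \<Longrightarrow> cmod (f x m) \<le> supn (f x)"
  by (rule inA_norm_le_supn[OF Hdual_inA])

lemma Hdual_zero:
  assumes f: "Hdual f" shows "f (\<lambda>i n. 0) = (\<lambda>n. 0)"
proof -
  have "f (\<lambda>i n. 0 + 0) = (\<lambda>n. f (\<lambda>i n. 0) n + f (\<lambda>i n. 0) n)"
    by (rule Hdual_add[OF f HA_zero HA_zero])
  thus ?thesis by (simp add: fun_eq_iff)
qed

lemma dual_norm_le:
  assumes "\<forall>x. HA x \<longrightarrow> Hnorm x \<le> 1 \<longrightarrow> supn (f x) \<le> B"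
  shows "dual_norm f \<le> B"
  unfolding dual_norm_def
proof (rule cSup_least)
  have "Hnorm (\<lambda>i n. 0) \<le> 1"
    using Hnorm_le_sqrt[OF HA_zero, of 0] by simp
  thus "{supn (f x) |x. HA x \<and> Hnorm x \<le> 1} \<noteq> {}" using HA_zero by blast
qed (use assms in blast)

lemma dual_norm_nonneg:
  assumes f: "Hdual f" shows "0 \<le> dual_norm f"
proof -
  obtain C where C0: "C \<ge> 0" and C: "\<forall>x. HA x \<longrightarrow> supn (f x) \<le> C * Hnorm x"
    using Hdual_bounded[OF f] by blast
  have "0 \<le> supn (f (\<lambda>i n. 0))"
    using Hdual_norm_le_supn[OF f HA_zero, of 0] norm_ge_zero order_trans by blast
  also have "supn (f (\<lambda>i n. 0)) \<le> dual_norm f"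
    unfolding dual_norm_def
  proof (rule cSup_upper)
    show "supn (f (\<lambda>i n. 0)) \<in> {supn (f x) |x. HA x \<and> Hnorm x \<le> 1}"
      using Hnorm_le_sqrt[OF HA_zero, of 0] HA_zero by auto
    show "bdd_above {supn (f x) |x. HA x \<and> Hnorm x \<le> 1}"
    proof (rule bdd_aboveI)
      fix t assume "t \<in> {supn (f x) |x. HA x \<and> Hnorm x \<le> 1}"
      then obtain x where "HA x" "Hnorm x \<le> 1" "t = supn (f x)" by blast
      moreover have "C * Hnorm x \<le> C * 1" using C0 \<open>Hnorm x \<le> 1\<close> by (intro mult_left_mono) auto
      ultimately show "t \<le> C" using C by fastforce
    qed
  qed
  finally show ?thesis .
qed

lemma Hdual_scale:
  assumes f: "Hdual f" and a: "inA a"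
  shows "Hdual (\<lambda>x m. cnj (a m) * f x m)"
proof -
  obtain B where B: "\<forall>n. cmod (a n) \<le> B" using inA_bounded[OF a] by blast
  have B0: "0 \<le> B" using B norm_ge_zero order_trans by blast
  obtain C where C: "\<forall>x. HA x \<longrightarrow> supn (f x) \<le> C * Hnorm x"
    using Hdual_bounded[OF f] by blast
  have bound: "supn (\<lambda>m. cnj (a m) * f x m) \<le> (B * C) * Hnorm x" if x: "HA x" for x
  proof -
    have "supn (\<lambda>m. cnj (a m) * f x m) \<le> B * supn (f x)"
    proof (rule supn_le)
      fix m
      have "cmod (cnj (a m) * f x m) = cmod (a m) * cmod (f x m)" by (simp add: norm_mult)
      also have "\<dots> \<le> B * supn (f x)"
        using B B0 Hdual_norm_le_supn[OF f x] by (intro mult_mono) auto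
      finally show "cmod (cnj (a m) * f x m) \<le> B * supn (f x)" .
    qed
    also have "\<dots> \<le> B * (C * Hnorm x)" using C x B0 by (intro mult_left_mono) auto
    finally show ?thesis by (simp add: mult.assoc)
  qed
  show ?thesis unfolding Hdual_def
  proof (intro conjI allI impI)
    fix x assume "HA x"
    thus "inA (\<lambda>m. cnj (a m) * f x m)" using Hdual_inA[OF f] a by (intro inA_mult inA_cnj)
  next
    fix x assume "\<not> HA x" thus "(\<lambda>m. cnj (a m) * f x m) = (\<lambda>_. 0)"
      using Hdual_outside[OF f] by simp
  next
    fix x y assume "HA x" "HA y"
    thus "(\<lambda>m. cnj (a m) * f (\<lambda>i n. x i n + y i n) m) = (\<lambda>n. cnj (a n) * f x n + cnj (a n) * f y n)"
      using Hdual_add[OF f] by (simp add: distrib_left)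
  next
    fix x b assume "HA x" "inA b"
    thus "(\<lambda>m. cnj (a m) * f (\<lambda>i n. x i n * b n) m) = (\<lambda>n. cnj (a n) * f x n * b n)"
      using Hdual_module[OF f] by (simp add: mult.assoc)
  qed (use bound in blast)
qed

definition coord :: "nat \<Rightarrow> (nat \<Rightarrow> nat \<Rightarrow> complex) \<Rightarrow> nat \<Rightarrow> complex" where
  "coord i = (\<lambda>y m. if HA y then y i m else 0)"

lemma Hdual_coord: "Hdual (coord i)"
  unfolding Hdual_def
proof (intro conjI allI impI)
  fix x assume "HA x" thus "inA (coord i x)" unfolding coord_def using HA_iff by auto
next
  fix x assume "\<not> HA x" thus "coord i x = (\<lambda>_. 0)" unfolding coord_def by simp
next
  fix x y assume "HA x" "HA y"
  thus "coord i (\<lambda>i n. x i n + y i n) = (\<lambda>n. coord i x n + coord i y n)"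
    unfolding coord_def using HA_add by simp
next
  fix x a assume "HA x" "inA a"
  thus "coord i (\<lambda>i n. x i n * a n) = (\<lambda>n. coord i x n * a n)"
    unfolding coord_def using HA_mult by simp
next
  have "supn (coord i x) \<le> 1 * Hnorm x" if x: "HA x" for x
  proof (rule supn_le)
    fix m
    have "(cmod (x i m))\<^sup>2 \<le> (\<Sum>j. (cmod (x j m))\<^sup>2)"
      using sum_le_suminf[OF HA_summable[OF x], of "{i}"] by simp
    hence "cmod (x i m) \<le> sqrt (\<Sum>j. (cmod (x j m))\<^sup>2)" using real_le_rsqrt by blast
    thus "cmod (coord i x m) \<le> 1 * Hnorm x"
      using sqrt_sum_squares_le_Hnorm[OF x, of m] x unfolding coord_def by simp
  qed
  thus "\<exists>C. \<forall>x. HA x \<longrightarrow> supn (coord i x) \<le> C * Hnorm x" by blast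
qed

lemma Hdual_truncation:
  assumes f: "Hdual f" and y: "\<forall>i. inA (y i)"
  shows "f (\<lambda>i m. if i < N then y i m else 0) = (\<lambda>m. \<Sum>i<N. f (unit_vec i) m * y i m)"
proof (induction N)
  case 0
  show ?case using Hdual_zero[OF f] by simp
next
  case (Suc N)
  have yN: "inA (y N)" using y by blast
  have head: "HA (\<lambda>i m. if i < N then y i m else 0)"
    using y by (intro HA_finite_support[of _ N]) (auto intro: inA_if_const)
  have "f (\<lambda>i m. if i < Suc N then y i m else 0)
      = f (\<lambda>i m. (if i < N then y i m else 0) + unit_vec N i m * y N m)"
    by (rule arg_cong[where f=f]) (auto simp: fun_eq_iff unit_vec_def)
  also have "\<dots> = (\<lambda>m. f (\<lambda>i m. if i < N then y i m else 0) m + f (\<lambda>i m. unit_vec N i m * y N m) m)"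
    by (rule Hdual_add[OF f head HA_mult[OF HA_unit_vec yN]])
  also have "f (\<lambda>i m. unit_vec N i m * y N m) = (\<lambda>m. f (unit_vec N) m * y N m)"
    by (rule Hdual_module[OF f HA_unit_vec yN])
  finally show ?case unfolding Suc.IH by simp
qed

lemma Hnorm_tail_tendsto_0:
  assumes y: "HA y" shows "(\<lambda>N. Hnorm (\<lambda>i m. if N \<le> i then y i m else 0)) \<longlonglongrightarrow> 0"
proof (rule LIMSEQ_I)
  fix r :: real assume r: "r > 0"
  obtain N0 where N0: "\<forall>N\<ge>N0. \<forall>m. tail_sum (\<lambda>i. (cmod (y i m))\<^sup>2) N \<le> (r/2)\<^sup>2"
    using y r uniform_l2_cauchy_tail[of y "(r/2)\<^sup>2"] by (auto simp: HA_iff)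
  have "norm (Hnorm (\<lambda>i m. if N \<le> i then y i m else 0) - 0) < r" if "N \<ge> N0" for N
  proof -
    have z: "HA (\<lambda>i m. if N \<le> i then y i m else 0)" by (rule HA_restrict[OF y])
    have "Hnorm (\<lambda>i m. if N \<le> i then y i m else 0) \<le> sqrt ((r/2)\<^sup>2)"
      using N0 that by (intro Hnorm_le_sqrt[OF z]) (simp add: tail_sum_def power2_norm_if_zero)
    thus ?thesis using Hnorm_nonneg[OF z] r by simp
  qed
  thus "\<exists>N0. \<forall>N\<ge>N0. norm (Hnorm (\<lambda>i m. if N \<le> i then y i m else 0) - 0) < r" by blast
qed

lemma Hdual_sums:
  assumes f: "Hdual f" and y: "HA y"
  shows "(\<lambda>i. f (unit_vec i) n * y i n) sums f y n"
proof -
  obtain C where C: "\<forall>x. HA x \<longrightarrow> supn (f x) \<le> C * Hnorm x"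
    using Hdual_bounded[OF f] by blast
  have yi: "\<forall>i. inA (y i)" using y HA_iff by blast
  have decomp: "f y n = (\<Sum>i<N. f (unit_vec i) n * y i n) + f (\<lambda>i m. if N \<le> i then y i m else 0) n"
    for N
  proof -
    have "f y = f (\<lambda>i m. (if i < N then y i m else 0) + (if N \<le> i then y i m else 0))"
      by (rule arg_cong[where f=f]) (auto simp: fun_eq_iff)
    also have "\<dots> = (\<lambda>m. f (\<lambda>i m. if i < N then y i m else 0) m + f (\<lambda>i m. if N \<le> i then y i m else 0) m)"
      by (rule Hdual_add[OF f HA_restrict[OF y] HA_restrict[OF y]])
    finally have "f y = \<dots>" .
    thus ?thesis unfolding Hdual_truncation[OF f yi] by simp
  qed
  have "(\<lambda>N. f (\<lambda>i m. if N \<le> i then y i m else 0) n) \<longlonglongrightarrow> 0"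
  proof (rule Lim_null_comparison)
    show "\<forall>\<^sub>F N in sequentially. norm (f (\<lambda>i m. if N \<le> i then y i m else 0) n)
        \<le> C * Hnorm (\<lambda>i m. if N \<le> i then y i m else 0)"
      using order_trans[OF Hdual_norm_le_supn[OF f HA_restrict[OF y]] C[rule_format, OF HA_restrict[OF y]]]
      by (intro always_eventually allI) simp
    show "(\<lambda>N. C * Hnorm (\<lambda>i m. if N \<le> i then y i m else 0)) \<longlonglongrightarrow> 0"
      using tendsto_mult_right_zero[OF Hnorm_tail_tendsto_0[OF y]] .
  qed
  hence "(\<lambda>N. f y n - f (\<lambda>i m. if N \<le> i then y i m else 0) n) \<longlonglongrightarrow> f y n - 0"
    by (intro tendsto_diff tendsto_const)
  moreover have "f y n - f (\<lambda>i m. if N \<le> i then y i m else 0) n = (\<Sum>i<N. f (unit_vec i) n * y i n)"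
    for N using decomp[of N] by (simp only: diff_eq_eq)
  ultimately show ?thesis unfolding sums_def by simp
qed

lemma Hdual_coeffs_summable:
  assumes f: "Hdual f" shows "summable (\<lambda>i. (cmod (f (unit_vec i) n))\<^sup>2)"
proof -
  obtain C where C: "\<forall>x. HA x \<longrightarrow> supn (f x) \<le> C * Hnorm x"
    using Hdual_bounded[OF f] by blast
  have "(\<Sum>i<N. (cmod (f (unit_vec i) n))\<^sup>2) \<le> C\<^sup>2" for N
  proof -
    define y where "y = (\<lambda>i m. if i < N then cnj (f (unit_vec i) m) else 0)"
    define P where "P m = (\<Sum>i<N. (cmod (f (unit_vec i) m))\<^sup>2)" for m
    have y: "HA y"
      unfolding y_def
      by (intro HA_finite_support[of _ N]) (auto intro!: inA_if_const inA_cnj Hdual_inA[OF f HA_unit_vec])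
    have "\<forall>i. inA (\<lambda>m. cnj (f (unit_vec i) m))"
      using Hdual_inA[OF f HA_unit_vec] by (simp add: inA_cnj)
    hence "f y = (\<lambda>m. \<Sum>i<N. f (unit_vec i) m * cnj (f (unit_vec i) m))"
      unfolding y_def by (rule Hdual_truncation[OF f])
    hence fy: "f y = (\<lambda>m. of_real (P m))"
      unfolding P_def by (simp flip: complex_norm_square)
    have hy: "Hinner y y = f y"
    proof
      fix m
      have "(\<lambda>i. (cmod (y i m))\<^sup>2) = (\<lambda>i. if i < N then (cmod (f (unit_vec i) m))\<^sup>2 else 0)"
        unfolding y_def by (auto simp: fun_eq_iff)
      hence "(\<Sum>i. (cmod (y i m))\<^sup>2) = P m"
        unfolding P_def by (simp add: sums_unique[OF sums_if_lessThan, symmetric])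
      thus "Hinner y y m = f y m" using Hinner_self[OF y] fy by simp
    qed
    have "supn (f y) \<le> C * sqrt (supn (f y))"
      using C[rule_format, OF y] unfolding Hnorm_def hy .
    moreover have "0 \<le> P n" unfolding P_def by (simp add: sum_nonneg)
    moreover have "P n \<le> supn (f y)"
      using Hdual_norm_le_supn[OF f y, of n] \<open>0 \<le> P n\<close> unfolding fy by simp
    ultimately show ?thesis using le_square_of_le_mult_sqrt[of "supn (f y)" C] unfolding P_def by simp
  qed
  thus ?thesis by (rule nonneg_series_bounded(1)[rotated]) simp
qed

definition coeff_functional ::
    "nat set \<Rightarrow> (nat \<Rightarrow> nat \<Rightarrow> complex) \<Rightarrow> (nat \<Rightarrow> nat \<Rightarrow> complex) \<Rightarrow> nat \<Rightarrow> complex" where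
  "coeff_functional T u = (\<lambda>y m. if HA y \<and> m \<in> T then (\<Sum>i. u m i * y i m) else 0)"

lemma coeff_pairing_bound:
  assumes v: "summable (\<lambda>i. (cmod (v i))\<^sup>2)" and y: "HA y"
  shows "summable (\<lambda>i. v i * y i m)"
    and "cmod (\<Sum>i. v i * y i m) \<le> sqrt (\<Sum>i. (cmod (v i))\<^sup>2) * Hnorm y"
proof -
  show "summable (\<lambda>i. v i * y i m)" using l2_cauchy_schwarz(1)[OF v HA_summable[OF y]] .
  have "cmod (\<Sum>i. v i * y i m) \<le> sqrt (\<Sum>i. (cmod (v i))\<^sup>2) * sqrt (\<Sum>i. (cmod (y i m))\<^sup>2)"
    using l2_cauchy_schwarz(2)[OF v HA_summable[OF y]] .
  also have "\<dots> \<le> sqrt (\<Sum>i. (cmod (v i))\<^sup>2) * Hnorm y"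
    using sqrt_sum_squares_le_Hnorm[OF y] suminf_nonneg[OF v] by (intro mult_left_mono) auto
  finally show "cmod (\<Sum>i. v i * y i m) \<le> sqrt (\<Sum>i. (cmod (v i))\<^sup>2) * Hnorm y" .
qed

lemma norm_coeff_functional_le:
  assumes sm: "\<forall>m\<in>T. summable (\<lambda>i. (cmod (u m i))\<^sup>2)"
    and bd: "\<forall>m\<in>T. (\<Sum>i. (cmod (u m i))\<^sup>2) \<le> B" and B0: "0 \<le> B"
    and y: "HA y"
  shows "cmod (coeff_functional T u y m) \<le> sqrt B * Hnorm y"
proof (cases "m \<in> T")
  case True
  have "cmod (coeff_functional T u y m) \<le> sqrt (\<Sum>i. (cmod (u m i))\<^sup>2) * Hnorm y"
    using coeff_pairing_bound(2)[OF sm[rule_format, OF True] y] True y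
    unfolding coeff_functional_def by simp
  also have "\<dots> \<le> sqrt B * Hnorm y"
    using bd True Hnorm_nonneg[OF y] by (intro mult_right_mono) auto
  finally show ?thesis .
qed (use B0 Hnorm_nonneg[OF y] in \<open>simp add: coeff_functional_def\<close>)

text \<open>For large m the row u m vanishes on the first K coordinates, so the value at m only
  sees the tail of y after K, whose norm is small.\<close>

lemma inA_coeff_functional:
  assumes sm: "\<forall>m\<in>T. summable (\<lambda>i. (cmod (u m i))\<^sup>2)"
    and bd: "\<forall>m\<in>T. (\<Sum>i. (cmod (u m i))\<^sup>2) \<le> B" and B0: "0 \<le> B"
    and van: "\<forall>K. \<exists>M0. \<forall>m\<in>T. M0 \<le> m \<longrightarrow> (\<forall>i<K. u m i = 0)"
    and y: "HA y"
  shows "inA (coeff_functional T u y)"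
proof (rule inA_tendsto_0, rule LIMSEQ_I)
  fix r :: real assume r: "r > 0"
  define z where "z K = (\<lambda>i m. if K \<le> i then y i m else 0)" for K
  have z: "HA (z K)" for K unfolding z_def by (rule HA_restrict[OF y])
  have "(\<lambda>K. sqrt B * Hnorm (z K)) \<longlonglongrightarrow> 0"
    unfolding z_def by (rule tendsto_mult_right_zero[OF Hnorm_tail_tendsto_0[OF y]])
  from LIMSEQ_D[OF this r] obtain K where "\<forall>n\<ge>K. norm (sqrt B * Hnorm (z n) - 0) < r"
    by blast
  hence K: "sqrt B * Hnorm (z K) < r" by (simp add: abs_less_iff)
  obtain M0 where M0: "\<forall>m\<in>T. M0 \<le> m \<longrightarrow> (\<forall>i<K. u m i = 0)" using van by blast
  have "coeff_functional T u y m = coeff_functional T u (z K) m" if "m \<ge> M0" for m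
  proof (cases "m \<in> T")
    case True
    hence "\<forall>i<K. u m i = 0" using M0 that by blast
    hence "(\<Sum>i. u m i * y i m) = (\<Sum>i. u m i * z K i m)"
      by (intro suminf_cong) (auto simp: z_def not_le)
    thus ?thesis using True y z unfolding coeff_functional_def by simp
  qed (simp add: coeff_functional_def)
  hence "cmod (coeff_functional T u y m) < r" if "m \<ge> M0" for m
    using order_le_less_trans[OF norm_coeff_functional_le[OF sm bd B0 z] K] that by simp
  thus "\<exists>M0. \<forall>m\<ge>M0. norm (coeff_functional T u y m - 0) < r" by auto
qed

lemma
  assumes sm: "\<forall>m\<in>T. summable (\<lambda>i. (cmod (u m i))\<^sup>2)"
    and bd: "\<forall>m\<in>T. (\<Sum>i. (cmod (u m i))\<^sup>2) \<le> B" and B0: "0 \<le> B"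
    and van: "\<forall>K. \<exists>M0. \<forall>m\<in>T. M0 \<le> m \<longrightarrow> (\<forall>i<K. u m i = 0)"
  shows Hdual_coeff_functional: "Hdual (coeff_functional T u)"
    and dual_norm_coeff_functional_le: "dual_norm (coeff_functional T u) \<le> sqrt B"
proof -
  have bound: "supn (coeff_functional T u y) \<le> sqrt B * Hnorm y" if "HA y" for y
    using norm_coeff_functional_le[OF sm bd B0 that] by (rule supn_le)
  show "Hdual (coeff_functional T u)" unfolding Hdual_def
  proof (intro conjI allI impI)
    fix x assume "HA x" thus "inA (coeff_functional T u x)"
      by (rule inA_coeff_functional[OF sm bd B0 van])
  next
    fix x assume "\<not> HA x" thus "coeff_functional T u x = (\<lambda>_. 0)"
      unfolding coeff_functional_def by simp
  next
    fix x y assume x: "HA x" and y: "HA y"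
    have "(\<Sum>i. u m i * (x i m + y i m)) = (\<Sum>i. u m i * x i m) + (\<Sum>i. u m i * y i m)"
      if "m \<in> T" for m
      using suminf_add[OF coeff_pairing_bound(1)[OF sm[rule_format, OF that] x]
          coeff_pairing_bound(1)[OF sm[rule_format, OF that] y]]
      by (simp add: distrib_left)
    thus "coeff_functional T u (\<lambda>i n. x i n + y i n)
        = (\<lambda>n. coeff_functional T u x n + coeff_functional T u y n)"
      unfolding coeff_functional_def using x y HA_add[OF x y] by auto
  next
    fix x a assume x: "HA x" and a: "inA a"
    have "(\<Sum>i. u m i * (x i m * a m)) = (\<Sum>i. u m i * x i m) * a m" if "m \<in> T" for m
      using suminf_mult2[OF coeff_pairing_bound(1)[OF sm[rule_format, OF that] x], where c="a m"]
      by (simp add: mult.assoc)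
    thus "coeff_functional T u (\<lambda>i n. x i n * a n) = (\<lambda>n. coeff_functional T u x n * a n)"
      unfolding coeff_functional_def using x HA_mult[OF x a] by auto
  qed (use bound in blast)
  show "dual_norm (coeff_functional T u) \<le> sqrt B"
  proof (rule dual_norm_le, intro allI impI)
    fix x assume x: "HA x" and "Hnorm x \<le> 1"
    hence "sqrt B * Hnorm x \<le> sqrt B" using B0 by (simp add: mult_left_le)
    thus "supn (coeff_functional T u x) \<le> sqrt B" using bound[OF x] by simp
  qed
qed

section \<open>The bidual module H_A''\<close>

lemma Hbidual_inA: "Hbidual F \<Longrightarrow> Hdual f \<Longrightarrow> inA (F f)"
  unfolding Hbidual_def by blast

lemma Hbidual_add:
  "Hbidual F \<Longrightarrow> Hdual f \<Longrightarrow> Hdual g \<Longrightarrow> F (\<lambda>x n. f x n + g x n) = (\<lambda>n. F f n + F g n)"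
  unfolding Hbidual_def by blast

lemma Hbidual_module:
  "Hbidual F \<Longrightarrow> Hdual f \<Longrightarrow> inA a \<Longrightarrow> F (\<lambda>x n. cnj (a n) * f x n) = (\<lambda>n. F f n * a n)"
  unfolding Hbidual_def by blast

lemma Hbidual_pointwise_bounded:
  assumes F: "Hbidual F"
  shows "\<exists>D\<ge>0. \<forall>f. Hdual f \<longrightarrow> (\<forall>m. cmod (F f m) \<le> D * dual_norm f)"
proof -
  obtain D where D: "\<forall>f. Hdual f \<longrightarrow> supn (F f) \<le> D * dual_norm f"
    using F unfolding Hbidual_def by blast
  have "cmod (F f m) \<le> max D 0 * dual_norm f" if f: "Hdual f" for f m
  proof -
    have "cmod (F f m) \<le> supn (F f)" using inA_norm_le_supn[OF Hbidual_inA[OF F f]] .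
    also have "\<dots> \<le> D * dual_norm f" using D f by blast
    also have "\<dots> \<le> max D 0 * dual_norm f" using dual_norm_nonneg[OF f] by (intro mult_right_mono) auto
    finally show ?thesis .
  qed
  thus ?thesis by (intro exI[of _ "max D 0"]) auto
qed

lemma
  assumes "summable (\<lambda>i. (cmod (v i))\<^sup>2)"
  shows Hdual_point_functional: "Hdual (coeff_functional {n} (\<lambda>_. v))"
    and dual_norm_point_functional_le:
      "dual_norm (coeff_functional {n} (\<lambda>_. v)) \<le> sqrt (\<Sum>i. (cmod (v i))\<^sup>2)"
proof -
  have "\<forall>K. \<exists>M0. \<forall>m\<in>{n}. M0 \<le> m \<longrightarrow> (\<forall>i<K. v i = 0)"
    by (intro allI exI[of _ "Suc n"]) auto
  moreover have "0 \<le> (\<Sum>i. (cmod (v i))\<^sup>2)" using assms by (simp add: suminf_nonneg)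
  ultimately show "Hdual (coeff_functional {n} (\<lambda>_. v))"
    and "dual_norm (coeff_functional {n} (\<lambda>_. v)) \<le> sqrt (\<Sum>i. (cmod (v i))\<^sup>2)"
    using Hdual_coeff_functional[of "{n}" "\<lambda>_. v"] dual_norm_coeff_functional_le[of "{n}" "\<lambda>_. v"]
      assms by auto
qed

lemma coeff_functional_point_peel:
  assumes v: "summable (\<lambda>i. (cmod (v i))\<^sup>2)"
  shows "coeff_functional {n} (\<lambda>_ i. if N \<le> i then v i else 0)
    = (\<lambda>y m. coeff_functional {n} (\<lambda>_ i. if Suc N \<le> i then v i else 0) y m
        + (if m = n then v N else 0) * coord N y m)"
proof (intro ext)
  fix y m
  show "coeff_functional {n} (\<lambda>_ i. if N \<le> i then v i else 0) y m
      = coeff_functional {n} (\<lambda>_ i. if Suc N \<le> i then v i else 0) y m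
        + (if m = n then v N else 0) * coord N y m"
  proof (cases "HA y \<and> m = n")
    case True
    hence y: "HA y" by simp
    have tail: "summable (\<lambda>i. (cmod (if Suc N \<le> i then v i else 0))\<^sup>2)"
      using summable_tail[OF v, of "Suc N"] by (simp add: power2_norm_if_zero)
    have "(\<Sum>i. (if N \<le> i then v i else 0) * y i m)
        = (\<Sum>i. (if Suc N \<le> i then v i else 0) * y i m + (if i = N then v N * y N m else 0))"
      by (intro suminf_cong) auto
    also have "\<dots> = (\<Sum>i. (if Suc N \<le> i then v i else 0) * y i m) + v N * y N m"
      using suminf_add[OF coeff_pairing_bound(1)[OF tail y] summable_single[of N "\<lambda>_. v N * y N m"]]
        sums_unique[OF sums_single[of N "\<lambda>_. v N * y N m"]] by simp
    finally show ?thesis using True unfolding coeff_functional_def coord_def by simp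
  qed (auto simp: coeff_functional_def coord_def)
qed

lemma Hbidual_point_functional_peel:
  assumes F: "Hbidual F" and v: "summable (\<lambda>i. (cmod (v i))\<^sup>2)"
  shows "F (coeff_functional {n} (\<lambda>_ i. if N \<le> i then v i else 0)) n
    = F (coeff_functional {n} (\<lambda>_ i. if Suc N \<le> i then v i else 0)) n + F (coord N) n * cnj (v N)"
proof -
  define a where "a = (\<lambda>m. if m = n then cnj (v N) else 0)"
  have a: "inA a" unfolding a_def by (rule inA_indicator_point)
  have tail: "summable (\<lambda>i. (cmod (if Suc N \<le> i then v i else 0))\<^sup>2)"
    using summable_tail[OF v, of "Suc N"] by (simp add: power2_norm_if_zero)
  have "F (coeff_functional {n} (\<lambda>_ i. if N \<le> i then v i else 0))
      = F (\<lambda>y m. coeff_functional {n} (\<lambda>_ i. if Suc N \<le> i then v i else 0) y m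
          + cnj (a m) * coord N y m)"
    unfolding coeff_functional_point_peel[OF v, of n N] a_def
    by (intro arg_cong[where f=F]) (auto simp: fun_eq_iff)
  also have "\<dots> = (\<lambda>m. F (coeff_functional {n} (\<lambda>_ i. if Suc N \<le> i then v i else 0)) m
      + F (\<lambda>y m. cnj (a m) * coord N y m) m)"
    by (rule Hbidual_add[OF F Hdual_point_functional[OF tail] Hdual_scale[OF Hdual_coord a]])
  also have "F (\<lambda>y m. cnj (a m) * coord N y m) = (\<lambda>m. F (coord N) m * a m)"
    by (rule Hbidual_module[OF F Hdual_coord a])
  finally show ?thesis unfolding a_def by simp
qed

text \<open>Peeling off the coordinates one at a time writes F of a point functional as a partial
  sum plus F of a tail functional, whose dual norm is the l^2-norm of the tail of v.\<close>

lemma Hbidual_point_functional_sums: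
  assumes F: "Hbidual F" and v: "summable (\<lambda>i. (cmod (v i))\<^sup>2)"
  shows "(\<lambda>i. F (coord i) n * cnj (v i)) sums F (coeff_functional {n} (\<lambda>_. v)) n"
proof -
  obtain D where D0: "D \<ge> 0" and D: "\<forall>f. Hdual f \<longrightarrow> (\<forall>m. cmod (F f m) \<le> D * dual_norm f)"
    using Hbidual_pointwise_bounded[OF F] by blast
  define G where "G N = coeff_functional {n} (\<lambda>_ i. if N \<le> i then v i else 0)" for N
  have tail: "summable (\<lambda>i. (cmod (if N \<le> i then v i else 0))\<^sup>2)" for N
    using summable_tail[OF v, of N] by (simp add: power2_norm_if_zero)
  have G: "Hdual (G N)" "dual_norm (G N) \<le> sqrt (tail_sum (\<lambda>i. (cmod (v i))\<^sup>2) N)" for N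
    using Hdual_point_functional[OF tail] dual_norm_point_functional_le[OF tail[of N], of n]
    unfolding G_def by (simp_all add: tail_sum_def power2_norm_if_zero)
  have partial: "F (G 0) n - F (G N) n = (\<Sum>i<N. F (coord i) n * cnj (v i))" for N
  proof (induction N)
    case (Suc N)
    thus ?case using Hbidual_point_functional_peel[OF F v, of n N] unfolding G_def
      by (simp add: algebra_simps)
  qed simp
  have "(\<lambda>N. F (G N) n) \<longlonglongrightarrow> 0"
  proof (rule Lim_null_comparison)
    show "\<forall>\<^sub>F N in sequentially. norm (F (G N) n) \<le> D * sqrt (tail_sum (\<lambda>i. (cmod (v i))\<^sup>2) N)"
    proof (intro always_eventually allI)
      fix N
      have "norm (F (G N) n) \<le> D * dual_norm (G N)" using D G(1) by blast
      also have "\<dots> \<le> D * sqrt (tail_sum (\<lambda>i. (cmod (v i))\<^sup>2) N)"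
        using G(2) D0 by (rule mult_left_mono)
      finally show "norm (F (G N) n) \<le> D * sqrt (tail_sum (\<lambda>i. (cmod (v i))\<^sup>2) N)" .
    qed
    have "(\<lambda>N. sqrt (tail_sum (\<lambda>i. (cmod (v i))\<^sup>2) N)) \<longlonglongrightarrow> sqrt 0"
      by (intro tendsto_real_sqrt tail_sum_tendsto_0 v)
    thus "(\<lambda>N. D * sqrt (tail_sum (\<lambda>i. (cmod (v i))\<^sup>2) N)) \<longlonglongrightarrow> 0"
      using tendsto_mult_right_zero by fastforce
  qed
  hence "(\<lambda>N. F (G 0) n - F (G N) n) \<longlonglongrightarrow> F (G 0) n - 0"
    by (intro tendsto_diff tendsto_const)
  moreover have "G 0 = coeff_functional {n} (\<lambda>_. v)" unfolding G_def by simp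
  ultimately show ?thesis unfolding sums_def partial by simp
qed

lemma Hbidual_sums:
  assumes F: "Hbidual F" and v: "summable (\<lambda>i. (cmod (v i))\<^sup>2)" and g: "Hdual g"
    and gv: "\<forall>y. HA y \<longrightarrow> g y n = (\<Sum>i. v i * y i n)"
  shows "(\<lambda>i. F (coord i) n * cnj (v i)) sums F g n"
proof -
  define e where "e = (\<lambda>m::nat. if m = n then (1::complex) else 0)"
  have "coeff_functional {n} (\<lambda>_. v) = (\<lambda>y m. cnj (e m) * g y m)"
    using gv Hdual_outside[OF g] unfolding e_def coeff_functional_def by (auto simp: fun_eq_iff)
  hence "F (coeff_functional {n} (\<lambda>_. v)) = (\<lambda>m. F g m * e m)"
    unfolding e_def using Hbidual_module[OF F g inA_indicator_point] by simp
  hence "F (coeff_functional {n} (\<lambda>_. v)) n = F g n" unfolding e_def by (simp add: fun_eq_iff)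
  thus ?thesis using Hbidual_point_functional_sums[OF F v, of n] by simp
qed

lemma Hbidual_coeff_functional_sums:
  assumes F: "Hbidual F" and g: "Hdual (coeff_functional T u)"
    and sm: "summable (\<lambda>i. (cmod (u m i))\<^sup>2)"
  shows "(\<lambda>i. if m \<in> T then F (coord i) m * cnj (u m i) else 0) sums F (coeff_functional T u) m"
proof -
  have "(\<lambda>i. F (coord i) m * cnj (if m \<in> T then u m i else 0)) sums F (coeff_functional T u) m"
  proof (rule Hbidual_sums[OF F _ g])
    show "summable (\<lambda>i. (cmod (if m \<in> T then u m i else 0))\<^sup>2)"
      using sm by (cases "m \<in> T") simp_all
    show "\<forall>y. HA y \<longrightarrow> coeff_functional T u y m = (\<Sum>i. (if m \<in> T then u m i else 0) * y i m)"
      unfolding coeff_functional_def by simp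
  qed
  moreover have "(\<lambda>i. F (coord i) m * cnj (if m \<in> T then u m i else 0))
      = (\<lambda>i. if m \<in> T then F (coord i) m * cnj (u m i) else 0)"
    by auto
  ultimately show ?thesis by simp
qed

lemma Hbidual_coeffs_bounded:
  assumes F: "Hbidual F"
  obtains B where "\<And>n. summable (\<lambda>i. (cmod (F (coord i) n))\<^sup>2)"
    and "\<And>n. (\<Sum>i. (cmod (F (coord i) n))\<^sup>2) \<le> B"
proof -
  obtain D where D0: "D \<ge> 0" and D: "\<forall>f. Hdual f \<longrightarrow> (\<forall>m. cmod (F f m) \<le> D * dual_norm f)"
    using Hbidual_pointwise_bounded[OF F] by blast
  have bounded: "(\<Sum>i<N. (cmod (F (coord i) n))\<^sup>2) \<le> D\<^sup>2" for N n
  proof -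
    define v where "v = (\<lambda>i. if i < N then F (coord i) n else 0)"
    define P where "P = (\<Sum>i<N. (cmod (F (coord i) n))\<^sup>2)"
    have "(\<lambda>i. (cmod (v i))\<^sup>2) = (\<lambda>i. if i < N then (cmod (F (coord i) n))\<^sup>2 else 0)"
      unfolding v_def by auto
    hence vs: "(\<lambda>i. (cmod (v i))\<^sup>2) sums P" unfolding P_def by (simp add: sums_if_lessThan)
    have series: "(\<lambda>i. F (coord i) n * cnj (v i))
        = (\<lambda>i. if i < N then of_real ((cmod (F (coord i) n))\<^sup>2) else 0)"
      unfolding v_def by (simp add: fun_eq_iff complex_norm_square del: of_real_power)
    have "(\<lambda>i. F (coord i) n * cnj (v i)) sums of_real P"
      unfolding series P_def of_real_sum by (rule sums_if_lessThan)
    hence Fv: "F (coeff_functional {n} (\<lambda>_. v)) n = of_real P"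
      using Hbidual_point_functional_sums[OF F sums_summable[OF vs]] sums_unique2 by blast
    have P0: "0 \<le> P" unfolding P_def by (simp add: sum_nonneg)
    have "P = cmod (F (coeff_functional {n} (\<lambda>_. v)) n)" using P0 by (simp add: Fv)
    also have "\<dots> \<le> D * dual_norm (coeff_functional {n} (\<lambda>_. v))"
      using D Hdual_point_functional[OF sums_summable[OF vs]] by blast
    also have "\<dots> \<le> D * sqrt P"
      using dual_norm_point_functional_le[OF sums_summable[OF vs]] D0
      unfolding sums_unique[OF vs, symmetric] by (rule mult_left_mono)
    finally show ?thesis
      using le_square_of_le_mult_sqrt[OF P0] unfolding P_def by blast
  qed
  show ?thesis
  proof (rule that)
    show "summable (\<lambda>i. (cmod (F (coord i) n))\<^sup>2)" for n
      by (rule nonneg_series_bounded(1)[OF _ bounded]) simp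
    show "(\<Sum>i. (cmod (F (coord i) n))\<^sup>2) \<le> D\<^sup>2" for n
      by (rule nonneg_series_bounded(2)[OF _ bounded]) simp
  qed
qed

lemma Hbidual_coeffs_summable: "Hbidual F \<Longrightarrow> summable (\<lambda>i. (cmod (F (coord i) n))\<^sup>2)"
  using Hbidual_coeffs_bounded by metis

section \<open>Uniformly small tails of the coefficients of a bidual element\<close>

lemma sparse_points_with_large_tails:
  fixes t :: "nat \<Rightarrow> nat \<Rightarrow> real"
  assumes lim: "\<And>m. t m \<longlonglongrightarrow> 0" and e: "0 < e" and large: "\<And>N. \<exists>m. e < t m N"
  obtains p K where "strict_mono p" and "\<And>j. Suc (p j) < p (Suc j)"
    and "\<And>j. j \<le> K j" and "\<And>j. e < t (p j) (K j)"
proof -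
  have "\<exists>q. L < fst q \<and> L \<le> snd q \<and> e < t (fst q) (snd q)" for L
  proof -
    have "eventually (\<lambda>K. \<forall>m\<in>{..L}. t m K < e) sequentially"
      using lim e by (intro eventually_ball_finite) (auto intro: order_tendstoD)
    then obtain K1 where K1: "\<forall>K\<ge>K1. \<forall>m\<in>{..L}. t m K < e"
      unfolding eventually_sequentially by blast
    obtain m where m: "e < t m (max K1 L)" using large by blast
    have "L < m"
    proof (rule ccontr)
      assume "\<not> L < m"
      hence "t m (max K1 L) < e" using K1 by simp
      thus False using m by simp
    qed
    thus ?thesis using m by (intro exI[of _ "(m, max K1 L)"]) auto
  qed
  then obtain ch where ch: "\<And>L. L < fst (ch L) \<and> L \<le> snd (ch L) \<and> e < t (fst (ch L)) (snd (ch L))"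
    by metis
  define q where "q = rec_nat (ch 0) (\<lambda>j r. ch (Suc (fst r + j)))"
  have q0: "q 0 = ch 0" and qSuc: "q (Suc j) = ch (Suc (fst (q j) + j))" for j
    unfolding q_def by simp_all
  have gap: "Suc (fst (q j)) < fst (q (Suc j))" for j
    using ch[of "Suc (fst (q j) + j)"] unfolding qSuc by simp
  show ?thesis
  proof (rule that)
    show "strict_mono (\<lambda>j. fst (q j))"
      unfolding strict_mono_Suc_iff using gap Suc_lessD by blast
    show "Suc (fst (q j)) < fst (q (Suc j))" for j by (rule gap)
    show "j \<le> snd (q j)" for j
      using ch[of 0] ch[of "Suc (fst (q (j - 1)) + (j - 1))"] qSuc[of "j - 1"]
      by (cases j) (auto simp: q0)
    show "e < t (fst (q j)) (snd (q j))" for j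
      using ch[of 0] ch[of "Suc (fst (q (j - 1)) + (j - 1))"] qSuc[of "j - 1"]
      by (cases j) (auto simp: q0)
  qed
qed

lemma Hdual_sparse_tail_functional:
  assumes F: "Hbidual F" and p: "strict_mono p" and K: "\<And>j. j \<le> K j"
  shows "Hdual (coeff_functional (range p) (\<lambda>m i. if K (inv p m) \<le> i then F (coord i) m else 0))"
    (is "Hdual (coeff_functional _ ?u)")
proof -
  obtain B where sm: "\<And>m. summable (\<lambda>i. (cmod (F (coord i) m))\<^sup>2)"
    and bd: "\<And>m. (\<Sum>i. (cmod (F (coord i) m))\<^sup>2) \<le> B"
    using Hbidual_coeffs_bounded[OF F] by blast
  have usm: "summable (\<lambda>i. (cmod (?u m i))\<^sup>2)" for m
    using summable_tail[OF sm] by (simp add: power2_norm_if_zero)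
  have "(\<Sum>i. (cmod (?u m i))\<^sup>2) \<le> (\<Sum>i. (cmod (F (coord i) m))\<^sup>2)" for m
    by (intro suminf_le usm sm) simp
  hence ubd: "\<forall>m\<in>range p. (\<Sum>i. (cmod (?u m i))\<^sup>2) \<le> B"
    using order_trans[OF _ bd] by blast
  have B0: "0 \<le> B" using bd[of 0] suminf_nonneg[OF sm[of 0]] by simp
  have "\<exists>M0. \<forall>m\<in>range p. M0 \<le> m \<longrightarrow> (\<forall>i<L. ?u m i = 0)" for L
  proof (intro exI[of _ "p L"] ballI impI allI)
    fix m i assume "m \<in> range p" "p L \<le> m" "i < L"
    then obtain j where j: "m = p j" and "L \<le> j" using strict_mono_less_eq[OF p] by auto
    moreover have "K (inv p (p j)) = K j" using strict_mono_imp_inj_on[OF p] by simp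
    ultimately show "?u m i = 0" using \<open>i < L\<close> K[of j] by auto
  qed
  thus ?thesis by (intro Hdual_coeff_functional[OF _ ubd B0]) (simp_all add: usm)
qed

lemma Hbidual_realizes_sparse_tails:
  assumes F: "Hbidual F" and p: "strict_mono p" and K: "\<And>j. j \<le> K j"
  obtains g where "Hdual g"
    and "\<And>j. F g (p j) = of_real (tail_sum (\<lambda>i. (cmod (F (coord i) (p j)))\<^sup>2) (K j))"
    and "\<And>m. m \<notin> range p \<Longrightarrow> F g m = 0"
proof -
  define u where "u m i = (if K (inv p m) \<le> i then F (coord i) m else 0)" for m i
  define g where "g = coeff_functional (range p) u"
  have g: "Hdual g" unfolding g_def u_def by (rule Hdual_sparse_tail_functional[OF F p K])
  note sm = Hbidual_coeffs_summable[OF F]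
  have usm: "summable (\<lambda>i. (cmod (u m i))\<^sup>2)" for m
    unfolding u_def using summable_tail[OF sm] by (simp add: power2_norm_if_zero)
  show ?thesis
  proof (rule that[OF g])
    fix j
    have "K (inv p (p j)) = K j" using strict_mono_imp_inj_on[OF p] by simp
    hence row: "(\<lambda>i. if p j \<in> range p then F (coord i) (p j) * cnj (u (p j) i) else 0)
        = (\<lambda>i. of_real (if K j \<le> i then (cmod (F (coord i) (p j)))\<^sup>2 else 0))"
      unfolding u_def by (simp add: fun_eq_iff complex_norm_square del: of_real_power)
    have "(\<lambda>i. of_real (if K j \<le> i then (cmod (F (coord i) (p j)))\<^sup>2 else 0)) sums F g (p j)"
      using Hbidual_coeff_functional_sums[OF F g[unfolded g_def] usm, of "p j"]
      unfolding row g_def .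
    moreover have "(\<lambda>i. complex_of_real (if K j \<le> i then (cmod (F (coord i) (p j)))\<^sup>2 else 0))
        sums of_real (tail_sum (\<lambda>i. (cmod (F (coord i) (p j)))\<^sup>2) (K j))"
      unfolding tail_sum_def by (intro sums_of_real summable_sums summable_tail[OF sm])
    ultimately show "F g (p j) = of_real (tail_sum (\<lambda>i. (cmod (F (coord i) (p j)))\<^sup>2) (K j))"
      by (rule sums_unique2)
  next
    fix m assume "m \<notin> range p"
    hence "(\<lambda>i. 0) sums F g m"
      using Hbidual_coeff_functional_sums[OF F g[unfolded g_def] usm, of m] unfolding g_def by simp
    thus "F g m = 0" by (simp add: sums_iff)
  qed
qed

lemma Hbidual_uniform_tail:
  assumes F: "Hbidual F" and e: "e > 0"
  shows "\<exists>N. \<forall>m. tail_sum (\<lambda>i. (cmod (F (coord i) m))\<^sup>2) N \<le> e"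
proof (rule ccontr)
  define t where "t m = tail_sum (\<lambda>i. (cmod (F (coord i) m))\<^sup>2)" for m
  have lim: "t m \<longlonglongrightarrow> 0" for m
    unfolding t_def by (rule tail_sum_tendsto_0[OF Hbidual_coeffs_summable[OF F]])
  assume "\<not> (\<exists>N. \<forall>m. tail_sum (\<lambda>i. (cmod (F (coord i) m))\<^sup>2) N \<le> e)"
  hence large: "\<exists>m. e < t m N" for N unfolding t_def by (simp add: not_le)
  obtain p K where p: "strict_mono p" and gap: "\<And>j. Suc (p j) < p (Suc j)"
    and K: "\<And>j. j \<le> K j" and tail: "\<And>j. e < t (p j) (K j)"
    using sparse_points_with_large_tails[OF lim e large] by blast
  obtain g where g: "Hdual g" and on: "\<And>j. F g (p j) = of_real (t (p j) (K j))"
    and off: "\<And>m. m \<notin> range p \<Longrightarrow> F g m = 0"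
    using Hbidual_realizes_sparse_tails[OF F p K] unfolding t_def by blast
  have "Suc (p j) \<notin> range p" for j
  proof
    assume "Suc (p j) \<in> range p"
    then obtain k where k: "Suc (p j) = p k" by auto
    hence "j < k" using strict_mono_less[OF p] by (metis lessI)
    hence "p (Suc j) \<le> p k" using strict_mono_less_eq[OF p] by simp
    thus False using gap[of j] k by simp
  qed
  hence jump: "cmod (F g (Suc (p j)) - F g (p j)) = t (p j) (K j)" for j
    using off on e tail[of j] by simp
  have "(\<lambda>n. cmod (F g (Suc n) - F g n)) \<longlonglongrightarrow> 0"
    using Hbidual_inA[OF F g] unfolding inA_def by blast
  from LIMSEQ_D[OF this e] obtain N where "\<forall>n\<ge>N. cmod (F g (Suc n) - F g n) < e" by auto
  moreover have "N \<le> p N" using strict_mono_imp_increasing[OF p] .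
  ultimately show False using jump[of N] tail[of N] by fastforce
qed

section \<open>Reflexivity\<close>

lemma HA_Hbidual_coeffs:
  assumes F: "Hbidual F" shows "HA (\<lambda>i m. cnj (F (coord i) m))"
proof (rule uniform_l2_cauchy_imp_HA)
  show "\<forall>i. inA (\<lambda>m. cnj (F (coord i) m))"
    using Hbidual_inA[OF F Hdual_coord] inA_cnj by blast
  note sm = Hbidual_coeffs_summable[OF F]
  show "uniform_l2_cauchy (\<lambda>i m. cnj (F (coord i) m))" unfolding uniform_l2_cauchy_def
  proof (intro allI impI)
    fix e :: real assume "e > 0"
    then obtain N where N: "\<forall>m. tail_sum (\<lambda>i. (cmod (F (coord i) m))\<^sup>2) N \<le> e"
      using Hbidual_uniform_tail[OF F] by blast
    have "(\<Sum>i\<in>{N..<M}. (cmod (cnj (F (coord i) m)))\<^sup>2) \<le> e" if "N \<le> M" for m M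
      using sum_segment_le_tail_sum[OF sm _ that, of m] N by (simp add: order_trans)
    thus "\<exists>N. \<forall>m M. N \<le> M \<longrightarrow> (\<Sum>i = N..<M. (cmod (cnj (F (coord i) m)))\<^sup>2) \<le> e" by blast
  qed
qed

lemma Hbidual_eq_cnj_eval:
  assumes F: "Hbidual F" and f: "Hdual f"
  shows "F f = (\<lambda>n. cnj (f (\<lambda>i m. cnj (F (coord i) m)) n))"
proof
  fix n
  have "(\<lambda>i. F (coord i) n * cnj (f (unit_vec i) n)) sums F f n"
    using Hbidual_sums[OF F Hdual_coeffs_summable[OF f] f] Hdual_sums[OF f] sums_unique by blast
  moreover have "(\<lambda>i. f (unit_vec i) n * cnj (F (coord i) n)) sums f (\<lambda>i m. cnj (F (coord i) m)) n"
    by (rule Hdual_sums[OF f HA_Hbidual_coeffs[OF F]])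
  hence "(\<lambda>i. cnj (f (unit_vec i) n * cnj (F (coord i) n)))
      sums cnj (f (\<lambda>i m. cnj (F (coord i) m)) n)"
    by (rule sums_cnj[THEN iffD2])
  hence "(\<lambda>i. F (coord i) n * cnj (f (unit_vec i) n)) sums cnj (f (\<lambda>i m. cnj (F (coord i) m)) n)"
    by (simp add: mult.commute)
  ultimately show "F f n = cnj (f (\<lambda>i m. cnj (F (coord i) m)) n)" by (rule sums_unique2)
qed

theorem theorem6p1:
  shows "\<forall>F. Hbidual F \<longrightarrow>
           (\<exists>x. HA x \<and> (\<forall>f. Hdual f \<longrightarrow> F f = (\<lambda>n. cnj (f x n))))"
  using HA_Hbidual_coeffs Hbidual_eq_cnj_eval by blast

end
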